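(* Let $A_1,A_2$ be bounded operators on a Hilbert space and $n\ge0$ such that $\omega(A_1+A_2z)\le n$ for all $z\in\mathbb T$. Then $\omega(A_1+zA_2^* )\le n$ and $\omega(A_1^*+A_2z)\le n$ for all $z\in\mathbb T$.
   Context: $\omega(A)=\sup\{|\langle Ax,x\rangle|:\|x\|=1\}$ denotes the numerical radius; $\mathbb T$ is the unit circle. *)

theory Defs
  imports "HOL-Analysis.Analysis"
begin

text \<open>Complex inner product spaces (the library only has real inner product spaces).
  The inner product is linear in the second and conjugate-linear in the first argument;
  the norm is the one induced by the inner product.\<close>

class complex_inner = real_normed_vector +
  fixes scaleC :: "complex \<Rightarrow> 'a \<Rightarrow> 'a" (infixr \<open>*\<^sub>C\<close> 75)
  fixes cinner :: "'a \<Rightarrow> 'a \<Rightarrow> complex"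
  assumes scaleC_add_right: "a *\<^sub>C (x + y) = a *\<^sub>C x + a *\<^sub>C y"
    and scaleC_add_left: "(a + b) *\<^sub>C x = a *\<^sub>C x + b *\<^sub>C x"
    and scaleC_scaleC: "a *\<^sub>C (b *\<^sub>C x) = (a * b) *\<^sub>C x"
    and scaleC_one: "1 *\<^sub>C x = x"
    and scaleC_of_real: "(complex_of_real r) *\<^sub>C x = r *\<^sub>R x"
    and cinner_commute: "cinner x y = cnj (cinner y x)"
    and cinner_add_left: "cinner (x + y) z = cinner x z + cinner y z"
    and cinner_scaleC_left: "cinner (a *\<^sub>C x) y = cnj a * cinner x y"
    and cinner_self_norm: "cinner x x = complex_of_real ((norm x)\<^sup>2)"

class chilbert_space = complex_inner + complete_space

definition bounded_op :: "('a::complex_inner \<Rightarrow> 'a) \<Rightarrow> bool" where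
  "bounded_op T \<longleftrightarrow>
     (\<forall>x y. T (x + y) = T x + T y) \<and> (\<forall>c x. T (c *\<^sub>C x) = c *\<^sub>C T x) \<and>
     (\<exists>K. \<forall>x. norm (T x) \<le> K * norm x)"

definition is_adjoint :: "('a::complex_inner \<Rightarrow> 'a) \<Rightarrow> ('a \<Rightarrow> 'a) \<Rightarrow> bool" where
  "is_adjoint A B \<longleftrightarrow> (\<forall>x y. cinner (A x) y = cinner x (B y))"

text \<open>Numerical radius w(T) = sup{|<Tx,x>| : ||x|| = 1}; the 0 is added only so that the
  trivial space gets w(T) = 0 (it does not change the supremum otherwise).\<close>
definition numerical_radius :: "('a::complex_inner \<Rightarrow> 'a) \<Rightarrow> real" where
  "numerical_radius T = Sup ({cmod (cinner (T x) x) | x. norm x = 1} \<union> {0})"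

end

theory Submission
  imports Defs
begin

text \<open>Rotating the phase of z turns \<open>A\<^sub>1 + z A\<^sub>2\<close> into an operator whose numerical range
  contains a point of modulus \<open>|\<langle>A\<^sub>1x,x\<rangle>| + |\<langle>A\<^sub>2x,x\<rangle>|\<close>, and conversely that sum bounds
  \<open>|\<langle>(A\<^sub>1 + z A\<^sub>2)x,x\<rangle>|\<close> for every unimodular z. Hence the hypothesis says exactly that
  \<open>|\<langle>A\<^sub>1x,x\<rangle>| + |\<langle>A\<^sub>2x,x\<rangle>| \<le> n\<close> for all unit vectors x. Passing to an adjoint conjugates
  \<open>\<langle>Ax,x\<rangle>\<close> and so leaves this condition unchanged.\<close>

lemma cinner_add_right: "cinner x (y + z) = cinner x y + cinner x (z::'a::complex_inner)"
  by (metis cinner_commute cinner_add_left complex_cnj_add)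

lemma cinner_scaleC_right: "cinner x (a *\<^sub>C y) = a * cinner x (y::'a::complex_inner)"
  by (metis cinner_commute cinner_scaleC_left complex_cnj_mult complex_cnj_cnj)

lemma cmod_cinner_le_norm_unit:
  fixes x y :: "'a::complex_inner"
  assumes "norm x = 1"
  shows "cmod (cinner y x) \<le> norm y"
proof -
  define c where "c = cinner x y"
  define v where "v = y + (- c) *\<^sub>C x"  \<comment> \<open>the component of y orthogonal to x\<close>
  have xx: "cinner x x = 1"
    using assms cinner_self_norm[of x] by simp
  have yx: "cinner y x = cnj c"
    unfolding c_def by (metis cinner_commute)
  have "cinner v v = cinner y y - c * cnj c"
    unfolding v_def using xx yx c_def
    by (simp add: cinner_add_left cinner_add_right cinner_scaleC_left cinner_scaleC_right
        algebra_simps)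
  then have "(norm v)\<^sup>2 = (norm y)\<^sup>2 - (cmod c)\<^sup>2"
    using cinner_self_norm[of v] cinner_self_norm[of y] complex_norm_square[of c]
    by (metis of_real_diff of_real_eq_iff)
  then have "(cmod c)\<^sup>2 \<le> (norm y)\<^sup>2"
    by (smt (verit) zero_le_power2)
  then show ?thesis
    using yx by (simp add: power2_le_iff_abs_le)
qed

lemma cmod_add_cmod_le_of_unimodular:
  fixes a b :: complex
  assumes "\<And>w. cmod w = 1 \<Longrightarrow> cmod (a + w * b) \<le> n"
  shows "cmod a + cmod b \<le> n"
proof -
  define w where "w = cis (Arg a - Arg b)"
  have a: "a = cmod a * cis (Arg a)" and b: "b = cmod b * cis (Arg b)"
    using rcis_cmod_Arg[of a] rcis_cmod_Arg[of b] by (simp_all add: rcis_def)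
  have "w * b = cmod b * cis (Arg a)"
    unfolding w_def by (subst b) (simp add: cis_mult)
  then have "a + w * b = of_real (cmod a + cmod b) * cis (Arg a)"
    by (subst a) (simp add: distrib_right)
  then have "cmod (a + w * b) = cmod a + cmod b"
    by (simp add: norm_mult del: of_real_add)
  with assms[of w] show ?thesis
    by (simp add: w_def)
qed

lemma numerical_radius_le:
  fixes T :: "'a::complex_inner \<Rightarrow> 'a"
  assumes "\<And>x. norm x = 1 \<Longrightarrow> cmod (cinner (T x) x) \<le> n" and "n \<ge> 0"
  shows "numerical_radius T \<le> n"
  unfolding numerical_radius_def by (rule cSup_least) (use assms in auto)

lemma cmod_cinner_le_numerical_radius:
  fixes T :: "'a::complex_inner \<Rightarrow> 'a"
  assumes "bdd_above {cmod (cinner (T x) x) | x. norm x = 1}" and "norm x = 1"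
  shows "cmod (cinner (T x) x) \<le> numerical_radius T"
  unfolding numerical_radius_def
  by (rule cSup_upper) (use assms in auto)

lemma bdd_above_numerical_range:
  fixes T :: "'a::complex_inner \<Rightarrow> 'a"
  assumes "bounded_op T"
  shows "bdd_above {cmod (cinner (T x) x) | x. norm x = 1}"
proof -
  obtain K where K: "\<And>x. norm (T x) \<le> K * norm x"
    using assms unfolding bounded_op_def by blast
  show ?thesis
  proof (rule bdd_aboveI)
    fix r assume "r \<in> {cmod (cinner (T x) x) | x. norm x = 1}"
    then obtain x where "norm x = 1" "r = cmod (cinner (T x) x)"
      by blast
    then show "r \<le> K"
      using cmod_cinner_le_norm_unit[of x "T x"] K[of x] by simp
  qed
qed

lemma cinner_add_scaleC_left:
  "cinner (y + w *\<^sub>C u) x = cinner y x + cnj w * cinner (u::'a::complex_inner) x"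
  by (simp add: cinner_add_left cinner_scaleC_left)

lemma cmod_cinner_add_unimodular_le:
  fixes A1 A2 :: "'a::complex_inner \<Rightarrow> 'a"
  assumes "cmod w = 1"
  shows "cmod (cinner (A1 x + w *\<^sub>C A2 x) x) \<le> cmod (cinner (A1 x) x) + cmod (cinner (A2 x) x)"
  unfolding cinner_add_scaleC_left
  using assms by (metis norm_triangle_ineq norm_mult complex_mod_cnj mult_1_left)

lemma cmod_sum_le_of_numerical_radius_add_unimodular:
  fixes A1 A2 :: "'a::complex_inner \<Rightarrow> 'a"
  assumes "bounded_op A1" and "bounded_op A2"
    and "\<And>w. cmod w = 1 \<Longrightarrow> numerical_radius (\<lambda>x. A1 x + w *\<^sub>C A2 x) \<le> n"
    and "norm x = 1"
  shows "cmod (cinner (A1 x) x) + cmod (cinner (A2 x) x) \<le> n"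
proof (rule cmod_add_cmod_le_of_unimodular)
  fix w :: complex assume w: "cmod w = 1"
  obtain M1 M2 where M1: "\<And>y. norm y = 1 \<Longrightarrow> cmod (cinner (A1 y) y) \<le> M1"
    and M2: "\<And>y. norm y = 1 \<Longrightarrow> cmod (cinner (A2 y) y) \<le> M2"
    using bdd_above_numerical_range[OF assms(1)] bdd_above_numerical_range[OF assms(2)]
    unfolding bdd_above_def by blast
  have "bdd_above {cmod (cinner (A1 y + cnj w *\<^sub>C A2 y) y) | y. norm y = 1}"
  proof (rule bdd_aboveI)
    fix r assume "r \<in> {cmod (cinner (A1 y + cnj w *\<^sub>C A2 y) y) | y. norm y = 1}"
    then obtain y where "norm y = 1" "r = cmod (cinner (A1 y + cnj w *\<^sub>C A2 y) y)"
      by blast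
    then show "r \<le> M1 + M2"
      using cmod_cinner_add_unimodular_le[of "cnj w" A1 y A2] M1[of y] M2[of y] w by simp
  qed
  then have "cmod (cinner (A1 x + cnj w *\<^sub>C A2 x) x)
      \<le> numerical_radius (\<lambda>x. A1 x + cnj w *\<^sub>C A2 x)"
    using cmod_cinner_le_numerical_radius[where T = "\<lambda>x. A1 x + cnj w *\<^sub>C A2 x"] assms(4)
    by simp
  also have "\<dots> \<le> n"
    using assms(3) w by simp
  finally show "cmod (cinner (A1 x) x + w * cinner (A2 x) x) \<le> n"
    by (simp add: cinner_add_scaleC_left)
qed

lemma numerical_radius_add_unimodular_le:
  fixes C1 C2 :: "'a::complex_inner \<Rightarrow> 'a"
  assumes "\<And>x. norm x = 1 \<Longrightarrow> cmod (cinner (C1 x) x) + cmod (cinner (C2 x) x) \<le> n"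
    and "n \<ge> 0" and "cmod z = 1"
  shows "numerical_radius (\<lambda>x. C1 x + z *\<^sub>C C2 x) \<le> n"
proof (rule numerical_radius_le[OF _ assms(2)])
  fix x :: 'a assume "norm x = 1"
  then show "cmod (cinner (C1 x + z *\<^sub>C C2 x) x) \<le> n"
    using cmod_cinner_add_unimodular_le[OF assms(3), of C1 x C2] assms(1)[of x] by simp
qed

lemma cinner_adjoint_self: "is_adjoint A B \<Longrightarrow> cinner (B x) x = cnj (cinner (A x) x)"
  unfolding is_adjoint_def by (metis cinner_commute[of "B x" x])

theorem lemma4p6:
  fixes A1 A2 B1 B2 :: "'a::chilbert_space \<Rightarrow> 'a" and n :: real
  assumes "bounded_op A1" and "bounded_op A2"
    and "is_adjoint A1 B1" and "is_adjoint A2 B2"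
    and "n \<ge> 0"
    and "\<forall>z. cmod z = 1 \<longrightarrow> numerical_radius (\<lambda>x. A1 x + z *\<^sub>C A2 x) \<le> n"
  shows "\<forall>z. cmod z = 1 \<longrightarrow>
           numerical_radius (\<lambda>x. A1 x + z *\<^sub>C B2 x) \<le> n \<and>
           numerical_radius (\<lambda>x. B1 x + z *\<^sub>C A2 x) \<le> n"
proof (intro allI impI conjI)
  fix z :: complex assume z: "cmod z = 1"
  have sum_le: "cmod (cinner (A1 x) x) + cmod (cinner (A2 x) x) \<le> n" if "norm x = 1" for x
    using cmod_sum_le_of_numerical_radius_add_unimodular[OF assms(1,2) _ that] assms(6) by blast
  have "cmod (cinner (B1 x) x) = cmod (cinner (A1 x) x)"
    and "cmod (cinner (B2 x) x) = cmod (cinner (A2 x) x)" for x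
    by (simp_all add: cinner_adjoint_self[OF assms(3)] cinner_adjoint_self[OF assms(4)])
  with sum_le show "numerical_radius (\<lambda>x. A1 x + z *\<^sub>C B2 x) \<le> n"
    and "numerical_radius (\<lambda>x. B1 x + z *\<^sub>C A2 x) \<le> n"
    by (auto intro!: numerical_radius_add_unimodular_le[OF _ assms(5) z])
qed

end
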